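(* Suppose that the set $\mathbb{X}_f\subseteq\mathbb{X}$ satisfies the terminal set assumption below, that $\overline{\Delta}\ge M$, and that there exist matrices $X=X^\top\succ 0$ in $\mathbb{R}^{n\times n}$ and $Y\in\mathbb{R}^{m\times n}$ such that for all $p\in\{1,\dots,P+1\}$ $$\begin{bmatrix} X & 0 & 0 & A_{pM}X+B_{pM}Y \\ 0 & \tilde Q_{pM} & \tilde S_{pM} & X \\ 0 & \tilde S_{pM}^\top & \tilde R_{pM} & Y \\ (A_{pM}X+B_{pM}Y)^\top & X & Y^\top & X\end{bmatrix}\succeq 0 .$$ Set $P_f:=X^{-1}$ and $K_f:=YX^{-1}$. Then: (i) $\kappa_f(\Xi_f)\subseteq \Pi$; (ii) $f^{\kappa_f}_p(\Xi_f)\subseteq \Xi_f$ for all $p\in\{1,\dots,P+1\}$; (iii) for all $\xi=(x,w,\beta)\in\Xi_f$ and all $j\in\{1,\dots,M-1\}$, $f(\xi,(K_fx,j),1)\in\Xi$; and for all $\xi\in\Xi_f$, all $p\in\{1,\dots,P\}$, all $j\in\{1,\dots,M-1\}$ and any $v$, $f(f^{\kappa_f}_p(\xi),(v,j),0)\in\Xi$; (iv) for all $p\in\{1,\dots,P+1\}$ and all $\xi\in\Xi_f$, $$V_f(f^{\kappa_f}_p(\xi))-V_f(\xi)\le -\lambda(\xi,\kappa_f(\xi),1)-\sum_{i=1}^{p-1}\lambda\big(f^{\kappa_f}_i(\xi),\kappa_f(\xi),0\big).$$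
   Context: Plant: $x(t+1)=Ax(t)+Bu(t)$, $A\in\mathbb{R}^{n\times n}$, $B\in\mathbb{R}^{n\times m}$, with state constraint set $\mathbb{X}\subseteq\mathbb{R}^n$ and input constraint set $\mathbb{U}\subseteq\mathbb{R}^m$, both closed and containing the origin; cost matrices $Q\succ0$, $R\succ 0$. Token bucket parameters: integers $g\ge1$, $c\ge g$, $b\ge c$; $M:=\lceil c/g\rceil$. $P\in\mathbb{N}_0$ is the maximal number of consecutive packet losses; $\overline{\Delta}\in\mathbb{N}$ is the maximal sampling interval. Overall state $\xi=(x,w,\beta)\in\mathbb{R}^n\times\mathbb{R}^m\times\mathbb{Z}$, overall input $\pi=(v,\Delta)\in\mathbb{R}^m\times\mathbb{N}$, packet-loss variable $\sigma\in\{0,1\}$. Constraint sets: $\Xi:=\mathbb{X}\times\mathbb{U}\times\{0,1,\dots,b\}$, $\Pi:=\mathbb{U}\times\{1,\dots,\overline{\Delta}\}$. For $j\in\mathbb{N}_0$: $A_j:=A^j$, $B_j:=\sum_{i=0}^{j-1}A^iB$ (so $B_0=0$). Transition map: $f(\xi,(v,j),\sigma):=\big(A_jx+(1-\sigma)B_jw+\sigma B_jv,\ (1-\sigma)w+\sigma v,\ \min\{\beta+jg-c,b\}\big)$. Stage cost $\ell(\xi,\pi,\sigma):=x^\top Qx+(1-\sigma)w^\top Rw+\sigma v^\top Rv$, and interval cost $\lambda(\xi,\pi,\sigma):=\ell(\xi,\pi,\sigma)+\sum_{j=1}^{\Delta-1}\ell(f(\xi,(v,j),\sigma),\pi,\sigma)$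 for $\pi=(v,\Delta)$. For $i\in\mathbb{N}$: $Q_i:=\sum_{j=0}^{i-1}A_j^\top QA_j$, $S_i:=\sum_{j=1}^{i-1}A_j^\top QB_j$, $R_i:=iR+\sum_{j=1}^{i-1}B_j^\top QB_j$, and $\begin{bmatrix}\tilde Q_i&\tilde S_i\\ \tilde S_i^\top&\tilde R_i\end{bmatrix}:=\begin{bmatrix}Q_i&S_i\\ S_i^\top&R_i\end{bmatrix}^{-1}$. Terminal ingredients: for a gain $K_f\in\mathbb{R}^{m\times n}$, $\kappa_f(\xi):=(K_fx,M)$; $\Xi_f:=\mathbb{X}_f\times\mathbb{U}\times\{c-g,\dots,b\}$; $V_f(\xi):=x^\top P_fx$ with $P_f\succ0$. Iterates: $f^{\kappa_f}_1(\xi):=f(\xi,\kappa_f(\xi),1)$ and $f^{\kappa_f}_p(\xi):=f(f^{\kappa_f}_{p-1}(\xi),(v,M),0)$ for $p\in\{2,\dots,P+1\}$ (the value of $v$ is irrelevant since $\sigma=0$). Terminal set assumption: $\mathbb{X}_f\subseteq\mathbb{X}$ is closed, contains the origin, $K_f\mathbb{X}_f\subseteq\mathbb{U}$, $(A_{pM}+B_{pM}K_f)\mathbb{X}_f\subseteq\mathbb{X}_f$ for all $p\in\{1,\dots,P+1\}$, and $(A_{pM+j}+B_{pM+j}K_f)\mathbb{X}_f\subseteq\mathbb{X}$ for all $j\in\{1,\dots,M-1\}$ and all $p\in\{0,\dots,P\}$ (here $K_f=YX^{-1}$). *)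

theory Defs
  imports "HOL-Analysis.Analysis"
begin

section \<open>Matrix helpers (matrices are real^'c^'r, i.e. r rows, c columns)\<close>

text \<open>Matrix power (note: the operator ^ on vec is componentwise, so we define it).\<close>
fun mpow :: "real^'n^'n \<Rightarrow> nat \<Rightarrow> real^'n^'n" where
  "mpow A 0 = mat 1"
| "mpow A (Suc k) = A ** mpow A k"

definition pos_def :: "real^'n^'n \<Rightarrow> bool" where
  "pos_def M \<longleftrightarrow> transpose M = M \<and> (\<forall>x. x \<noteq> 0 \<longrightarrow> x \<bullet> (M *v x) > 0)"

definition pos_semidef :: "real^'n^'n \<Rightarrow> bool" where
  "pos_semidef M \<longleftrightarrow> transpose M = M \<and> (\<forall>x. x \<bullet> (M *v x) \<ge> 0)"

definition block2 ::
  "real^'c1::finite^'r1 \<Rightarrow> real^'c2::finite^'r1 \<Rightarrow> real^'c1::finite^'r2 \<Rightarrow> real^'c2::finite^'r2 \<Rightarrow> real^('c1::finite+'c2::finite)^('r1::finite+'r2::finite)" where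
  "block2 M11 M12 M21 M22 = (\<chi> i j. case i of
      Inl i1 \<Rightarrow> (case j of Inl j1 \<Rightarrow> M11 $ i1 $ j1 | Inr j2 \<Rightarrow> M12 $ i1 $ j2)
    | Inr i2 \<Rightarrow> (case j of Inl j1 \<Rightarrow> M21 $ i2 $ j1 | Inr j2 \<Rightarrow> M22 $ i2 $ j2))"

definition blk11 :: "real^('c1::finite+'c2::finite)^('r1::finite+'r2::finite) \<Rightarrow> real^'c1::finite^'r1" where
  "blk11 M = (\<chi> i j. M $ Inl i $ Inl j)"
definition blk12 :: "real^('c1::finite+'c2::finite)^('r1::finite+'r2::finite) \<Rightarrow> real^'c2::finite^'r1" where
  "blk12 M = (\<chi> i j. M $ Inl i $ Inr j)"
definition blk21 :: "real^('c1::finite+'c2::finite)^('r1::finite+'r2::finite) \<Rightarrow> real^'c1::finite^'r2" where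
  "blk21 M = (\<chi> i j. M $ Inr i $ Inl j)"
definition blk22 :: "real^('c1::finite+'c2::finite)^('r1::finite+'r2::finite) \<Rightarrow> real^'c2::finite^'r2" where
  "blk22 M = (\<chi> i j. M $ Inr i $ Inr j)"

definition row4 ::
  "real^'a::finite^'r \<Rightarrow> real^'b::finite^'r \<Rightarrow> real^'c::finite^'r \<Rightarrow> real^'d::finite^'r \<Rightarrow>
   'r \<Rightarrow> 'a + ('b + ('c + 'd)) \<Rightarrow> real" where
  "row4 N1 N2 N3 N4 r j = (case j of Inl a \<Rightarrow> N1 $ r $ a
     | Inr (Inl b) \<Rightarrow> N2 $ r $ b | Inr (Inr (Inl c)) \<Rightarrow> N3 $ r $ c
     | Inr (Inr (Inr d)) \<Rightarrow> N4 $ r $ d)"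

definition block4 ::
  "real^'a::finite^'a \<Rightarrow> real^'b::finite^'a \<Rightarrow> real^'c::finite^'a \<Rightarrow> real^'d::finite^'a \<Rightarrow>
   real^'a^'b \<Rightarrow> real^'b^'b \<Rightarrow> real^'c^'b \<Rightarrow> real^'d^'b \<Rightarrow>
   real^'a^'c \<Rightarrow> real^'b^'c \<Rightarrow> real^'c^'c \<Rightarrow> real^'d^'c \<Rightarrow>
   real^'a^'d \<Rightarrow> real^'b^'d \<Rightarrow> real^'c^'d \<Rightarrow> real^'d^'d \<Rightarrow>
   real^('a+('b+('c+'d)))^('a+('b+('c+'d)))" where
  "block4 M11 M12 M13 M14 M21 M22 M23 M24 M31 M32 M33 M34 M41 M42 M43 M44 =
     (\<chi> i j. case i of Inl a \<Rightarrow> row4 M11 M12 M13 M14 a j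
       | Inr (Inl b) \<Rightarrow> row4 M21 M22 M23 M24 b j
       | Inr (Inr (Inl c)) \<Rightarrow> row4 M31 M32 M33 M34 c j
       | Inr (Inr (Inr d)) \<Rightarrow> row4 M41 M42 M43 M44 d j)"

definition Aj :: "real^'n^'n \<Rightarrow> nat \<Rightarrow> real^'n^'n" where
  "Aj A j = mpow A j"

definition Bj :: "real^'n^'n \<Rightarrow> real^'m^'n \<Rightarrow> nat \<Rightarrow> real^'m^'n" where
  "Bj A B j = (\<Sum>i<j. mpow A i ** B)"

text \<open>Overall state xi = (x, w, beta), overall input pin = (v, Delta), packet-loss variable sigma in {0,1}.\<close>
type_synonym ('n,'m) ostate = "(real^'n) \<times> (real^'m) \<times> int"
type_synonym 'm oinput = "(real^'m) \<times> nat"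

definition trans_f ::
  "real^'n^'n \<Rightarrow> real^'m^'n \<Rightarrow> int \<Rightarrow> int \<Rightarrow> int \<Rightarrow>
   ('n,'m) ostate \<Rightarrow> 'm oinput \<Rightarrow> nat \<Rightarrow> ('n,'m) ostate" where
  "trans_f A B g c b xi pin \<sigma> =
     (case xi of (x, w, \<beta>) \<Rightarrow> case pin of (v, j) \<Rightarrow>
       (Aj A j *v x + (1 - real \<sigma>) *\<^sub>R (Bj A B j *v w) + real \<sigma> *\<^sub>R (Bj A B j *v v),
        (1 - real \<sigma>) *\<^sub>R w + real \<sigma> *\<^sub>R v,
        min (\<beta> + int j * g - c) b))"

definition stage_cost ::
  "real^'n^'n \<Rightarrow> real^'m^'m \<Rightarrow> ('n,'m) ostate \<Rightarrow> 'm oinput \<Rightarrow> nat \<Rightarrow> real" where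
  "stage_cost Q R xi pin \<sigma> =
     (case xi of (x, w, \<beta>) \<Rightarrow> case pin of (v, \<Delta>) \<Rightarrow>
       x \<bullet> (Q *v x) + (1 - real \<sigma>) * (w \<bullet> (R *v w)) + real \<sigma> * (v \<bullet> (R *v v)))"

definition interval_cost ::
  "real^'n^'n \<Rightarrow> real^'m^'n \<Rightarrow> real^'n^'n \<Rightarrow> real^'m^'m \<Rightarrow> int \<Rightarrow> int \<Rightarrow> int \<Rightarrow>
   ('n,'m) ostate \<Rightarrow> 'm oinput \<Rightarrow> nat \<Rightarrow> real" where
  "interval_cost A B Q R g c b xi pin \<sigma> =
     (case pin of (v, \<Delta>) \<Rightarrow>
       stage_cost Q R xi pin \<sigma>
       + (\<Sum>j\<in>{1..<\<Delta>}. stage_cost Q R (trans_f A B g c b xi (v, j) \<sigma>) pin \<sigma>))"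

definition Qi :: "real^'n^'n \<Rightarrow> real^'n^'n \<Rightarrow> nat \<Rightarrow> real^'n^'n" where
  "Qi A Q i = (\<Sum>j<i. transpose (Aj A j) ** Q ** Aj A j)"

definition Si :: "real^'n^'n \<Rightarrow> real^'m^'n \<Rightarrow> real^'n^'n \<Rightarrow> nat \<Rightarrow> real^'m^'n" where
  "Si A B Q i = (\<Sum>j\<in>{1..<i}. transpose (Aj A j) ** Q ** Bj A B j)"

definition Ri :: "real^'n^'n \<Rightarrow> real^'m^'n \<Rightarrow> real^'n^'n \<Rightarrow> real^'m^'m \<Rightarrow> nat \<Rightarrow> real^'m^'m" where
  "Ri A B Q R i = real i *\<^sub>R R + (\<Sum>j\<in>{1..<i}. transpose (Bj A B j) ** Q ** Bj A B j)"

definition QSR_inv ::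
  "real^'n^'n \<Rightarrow> real^'m^'n \<Rightarrow> real^'n^'n \<Rightarrow> real^'m^'m \<Rightarrow> nat \<Rightarrow> real^('n+'m)^('n+'m)" where
  "QSR_inv A B Q R i =
     matrix_inv (block2 (Qi A Q i) (Si A B Q i) (transpose (Si A B Q i)) (Ri A B Q R i))"

definition Qt :: "real^'n^'n \<Rightarrow> real^'m^'n \<Rightarrow> real^'n^'n \<Rightarrow> real^'m^'m \<Rightarrow> nat \<Rightarrow> real^'n^'n" where
  "Qt A B Q R i = blk11 (QSR_inv A B Q R i)"
definition St :: "real^'n^'n \<Rightarrow> real^'m^'n \<Rightarrow> real^'n^'n \<Rightarrow> real^'m^'m \<Rightarrow> nat \<Rightarrow> real^'m^'n" where
  "St A B Q R i = blk12 (QSR_inv A B Q R i)"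
definition Rt :: "real^'n^'n \<Rightarrow> real^'m^'n \<Rightarrow> real^'n^'n \<Rightarrow> real^'m^'m \<Rightarrow> nat \<Rightarrow> real^'m^'m" where
  "Rt A B Q R i = blk22 (QSR_inv A B Q R i)"

definition Mtb :: "int \<Rightarrow> int \<Rightarrow> nat" where
  "Mtb g c = nat \<lceil>real_of_int c / real_of_int g\<rceil>"

definition Xi_set :: "(real^'n) set \<Rightarrow> (real^'m) set \<Rightarrow> int \<Rightarrow> ('n,'m) ostate set" where
  "Xi_set XX UU b = XX \<times> UU \<times> {0..b}"

definition Pi_set :: "(real^'m) set \<Rightarrow> nat \<Rightarrow> 'm oinput set" where
  "Pi_set UU Dbar = UU \<times> {1..Dbar}"

definition kappa_f :: "real^'n^'m \<Rightarrow> nat \<Rightarrow> ('n,'m) ostate \<Rightarrow> 'm oinput" where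
  "kappa_f Kf M xi = (case xi of (x, w, \<beta>) \<Rightarrow> (Kf *v x, M))"

definition Xi_f :: "(real^'n) set \<Rightarrow> (real^'m) set \<Rightarrow> int \<Rightarrow> int \<Rightarrow> int \<Rightarrow> ('n,'m) ostate set" where
  "Xi_f Xf UU g c b = Xf \<times> UU \<times> {c - g..b}"

definition V_f :: "real^'n^'n \<Rightarrow> ('n,'m) ostate \<Rightarrow> real" where
  "V_f Pf xi = (case xi of (x, w, \<beta>) \<Rightarrow> x \<bullet> (Pf *v x))"

text \<open>Iterates f^{kappa_f}_p for p >= 1 (the value at p = 0 is unused; set to the identity).
  For p >= 2 the input v is irrelevant since sigma = 0; we use v = 0.\<close>
fun f_kf ::
  "real^'n^'n \<Rightarrow> real^'m^'n \<Rightarrow> int \<Rightarrow> int \<Rightarrow> int \<Rightarrow> real^'n^'m \<Rightarrow> nat \<Rightarrow>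
   ('n,'m) ostate \<Rightarrow> ('n,'m) ostate" where
  "f_kf A B g c b Kf 0 xi = xi"
| "f_kf A B g c b Kf (Suc 0) xi = trans_f A B g c b xi (kappa_f Kf (Mtb g c) xi) 1"
| "f_kf A B g c b Kf (Suc (Suc p)) xi =
     trans_f A B g c b (f_kf A B g c b Kf (Suc p) xi) (0, Mtb g c) 0"

end

theory Submission
  imports Defs
begin

text \<open>Under kappa_f the input u = K_f x is held for p M sampling instants, so the p-th iterate
  moves the plant state to x' = (A_{pM} + B_{pM} K_f) x, and the cost accumulated over these
  p intervals is the quadratic form of H_{pM} = [Q_{pM}, S_{pM}; S_{pM}^T, R_{pM}] at (x, u).
  The middle block of the LMI is H_{pM}^{-1}; evaluating the LMI at the vector
  (-P_f x', -H_{pM} (x, u), P_f x) gives exactly V_f(x') - V_f(x) + (x, u)^T H_{pM} (x, u) <= 0.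
  The token bucket part is bookkeeping: each interval of M >= c/g steps refills at least the
  c tokens a transmission costs, so the level never drops below c - g.\<close>

lemma sum_UNIV_Plus:
  "sum f (UNIV :: ('a::finite + 'b::finite) set) = sum (f \<circ> Inl) UNIV + sum (f \<circ> Inr) UNIV"
  by (metis UNIV_Plus_UNIV sum.Plus finite)

definition join2 :: "real^'a::finite \<Rightarrow> real^'b::finite \<Rightarrow> real^('a + 'b)" where
  "join2 a b = (\<chi> i. case i of Inl i1 \<Rightarrow> a $ i1 | Inr i2 \<Rightarrow> b $ i2)"

definition join4 ::
  "real^'a::finite \<Rightarrow> real^'b::finite \<Rightarrow> real^'c::finite \<Rightarrow> real^'d::finite \<Rightarrow>
   real^('a + ('b + ('c + 'd)))" where
  "join4 a b c d = join2 a (join2 b (join2 c d))"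

lemma join2_nth [simp]: "join2 a b $ Inl i = a $ i" "join2 a b $ Inr j = b $ j"
  by (simp_all add: join2_def)

lemma join2_eq_iff: "join2 a b = join2 a' b' \<longleftrightarrow> a = a' \<and> b = b'"
  by (auto simp: vec_eq_iff join2_def split: sum.splits)

lemma join2_cases:
  obtains a b where "w = join2 a b"
proof
  show "w = join2 (\<chi> i. w $ Inl i) (\<chi> i. w $ Inr i)"
    by (simp add: vec_eq_iff join2_def split: sum.splits)
qed

lemma join2_eq_0_iff [simp]: "join2 a b = 0 \<longleftrightarrow> a = 0 \<and> b = 0"
  by (auto simp: vec_eq_iff join2_def split: sum.splits)

lemma uminus_join2: "- join2 a b = join2 (- a) (- b)"
  by (simp add: vec_eq_iff join2_def split: sum.splits)

lemma inner_join2: "join2 a b \<bullet> join2 a' b' = a \<bullet> a' + b \<bullet> b'"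
  by (simp add: inner_vec_def sum_UNIV_Plus o_def)

lemma inner_join4: "join4 a b c d \<bullet> join4 a' b' c' d' = a \<bullet> a' + b \<bullet> b' + c \<bullet> c' + d \<bullet> d'"
  by (simp add: join4_def inner_join2)

lemma block2_mult_join2:
  "block2 M11 M12 M21 M22 *v join2 a b = join2 (M11 *v a + M12 *v b) (M21 *v a + M22 *v b)"
  by (simp add: vec_eq_iff block2_def join2_def matrix_vector_mult_def sum_UNIV_Plus o_def
      split: sum.splits)

lemma matrix_vector_mult_join2:
  "M *v join2 a b = join2 (blk11 M *v a + blk12 M *v b) (blk21 M *v a + blk22 M *v b)"
  by (simp add: vec_eq_iff blk11_def blk12_def blk21_def blk22_def join2_def
      matrix_vector_mult_def sum_UNIV_Plus o_def split: sum.splits)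

lemma block4_mult_join4:
  "block4 M11 M12 M13 M14 M21 M22 M23 M24 M31 M32 M33 M34 M41 M42 M43 M44 *v join4 a b c d
    = join4 (M11 *v a + M12 *v b + M13 *v c + M14 *v d) (M21 *v a + M22 *v b + M23 *v c + M24 *v d)
        (M31 *v a + M32 *v b + M33 *v c + M34 *v d) (M41 *v a + M42 *v b + M43 *v c + M44 *v d)"
  by (simp add: vec_eq_iff block4_def row4_def join4_def join2_def matrix_vector_mult_def
      sum_UNIV_Plus o_def add.assoc split: sum.splits)

lemma transpose_block2:
  "transpose (block2 M11 M12 M21 M22)
    = block2 (transpose M11) (transpose M21) (transpose M12) (transpose M22)"
  by (simp add: vec_eq_iff transpose_def block2_def split: sum.splits)

lemma transpose_blk12: "transpose (blk12 M) = blk21 (transpose M)"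
  by (simp add: vec_eq_iff transpose_def blk12_def blk21_def)

lemma matrix_vector_mult_uminus_right: "M *v (- y) = - (M *v (y::real^_))"
  by (simp add: vec_eq_iff matrix_vector_mult_def sum_negf)

lemma inner_transpose_right: "x \<bullet> (transpose M *v y) = (M *v x) \<bullet> (y::real^_)"
  by (metis dot_lmul_matrix inner_commute transpose_matrix_vector vector_transpose_matrix)

lemma symmetric_inner_commute: "transpose M = M \<Longrightarrow> x \<bullet> (M *v y) = y \<bullet> (M *v (x::real^_))"
  by (metis inner_transpose_right inner_commute)

lemma sum_matrix_vector_mult: "sum M S *v x = (\<Sum>j\<in>S. M j *v x)"
  by (induct S rule: infinite_finite_induct) (simp_all add: matrix_vector_mult_add_rdistrib)

lemma transpose_add: "transpose (M + N) = transpose M + transpose (N::real^'a^'b)"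
  by (simp add: transpose_def vec_eq_iff)

lemma transpose_sum: "transpose (sum M S) = (\<Sum>j\<in>S. transpose (M j :: real^'a^'b))"
proof (induct S rule: infinite_finite_induct)
  case (infinite S)
  then show ?case by (simp add: transpose_def vec_eq_iff)
next
  case empty
  then show ?case by (simp add: transpose_def vec_eq_iff)
qed (simp_all add: transpose_add)

lemma invertible_matrix_inv:
  "invertible M \<Longrightarrow> M ** matrix_inv M = mat 1 \<and> matrix_inv M ** M = mat 1"
  unfolding invertible_def matrix_inv_def by (rule someI_ex)

lemma transpose_matrix_inv_symmetric:
  fixes M :: "real^'k^'k"
  assumes "invertible M" and "transpose M = M"
  shows "transpose (matrix_inv M) = matrix_inv M"
proof -
  let ?N = "transpose (matrix_inv M)"
  have "?N ** M = mat 1"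
    by (metis assms invertible_matrix_inv matrix_transpose_mul transpose_mat)
  then have "?N = ?N ** (M ** matrix_inv M)"
    using invertible_matrix_inv[OF assms(1)] by simp
  also have "\<dots> = matrix_inv M"
    by (simp add: matrix_mul_assoc \<open>?N ** M = mat 1\<close>)
  finally show ?thesis .
qed

lemma pos_def_nonneg: "pos_def M \<Longrightarrow> 0 \<le> x \<bullet> (M *v x)"
  unfolding pos_def_def by (cases "x = 0") (auto intro: less_imp_le)

lemma pos_def_invertible:
  fixes M :: "real^'k^'k"
  assumes "pos_def M"
  shows "invertible M"
proof -
  have "\<forall>x. M *v x = 0 \<longrightarrow> x = 0"
    using assms by (force simp: pos_def_def)
  then show ?thesis
    using matrix_left_invertible_ker invertible_left_inverse by blast
qed

lemma mpow_add: "mpow A (a + b) = mpow A a ** mpow A b"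
  by (induct a) (simp_all add: matrix_mul_assoc)

lemma Aj_0 [simp]: "Aj A 0 = mat 1"
  by (simp add: Aj_def)

lemma Bj_0 [simp]: "Bj A B 0 = 0"
  by (simp add: Bj_def)

lemma Bj_add: "Bj A B (k + j) = Bj A B j + mpow A j ** Bj A B k"
proof (induct k)
  case 0
  then show ?case by simp
next
  case (Suc k)
  have "Bj A B (Suc k + j) = Bj A B (k + j) + mpow A (k + j) ** B"
    by (simp add: Bj_def)
  also have "\<dots> = Bj A B j + mpow A j ** (Bj A B k + mpow A k ** B)"
    using Suc by (simp add: matrix_add_ldistrib matrix_mul_assoc mpow_add add.commute[of k j]
        add.assoc)
  also have "Bj A B k + mpow A k ** B = Bj A B (Suc k)"
    by (simp add: Bj_def)
  finally show ?case .
qed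

lemma Aj_Bj_compose:
  "Aj A j *v (Aj A k *v x + Bj A B k *v u) + Bj A B j *v u = Aj A (k + j) *v x + Bj A B (k + j) *v u"
proof -
  have "Aj A (k + j) = mpow A j ** mpow A k"
    by (simp add: Aj_def mpow_add[symmetric] add.commute)
  then show ?thesis
    unfolding Bj_add[of A B k j]
    by (simp add: Aj_def matrix_vector_right_distrib matrix_vector_mul_assoc
        matrix_vector_mult_add_rdistrib algebra_simps)
qed

lemma closed_loop_matrix_apply:
  "(Aj A k + Bj A B k ** K) *v x = Aj A k *v x + Bj A B k *v (K *v x)"
  by (simp add: matrix_vector_mult_add_rdistrib matrix_vector_mul_assoc)

text \<open>Stated with Suc 0 rather than 1, the form the simplifier normalizes the numeral to.\<close>

lemma trans_f_sent:
  "trans_f A B g c b (x, w, \<beta>) (v, j) (Suc 0) = (Aj A j *v x + Bj A B j *v v, v, min (\<beta> + int j * g - c) b)"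
  by (simp add: trans_f_def)

lemma trans_f_held:
  "trans_f A B g c b (x, w, \<beta>) (v, j) 0 = (Aj A j *v x + Bj A B j *v w, w, min (\<beta> + int j * g - c) b)"
  by (simp add: trans_f_def)

lemma ceiling_quotient_ge_1:
  assumes "1 \<le> g" "g \<le> c"
  shows "1 \<le> \<lceil>real_of_int c / real_of_int g\<rceil>"
proof -
  have "1 \<le> real_of_int c / real_of_int g"
    using assms by simp
  then show ?thesis
    using le_of_int_ceiling[of "real_of_int c / real_of_int g"] by linarith
qed

lemma Mtb_ge_1:
  assumes "1 \<le> g" "g \<le> c"
  shows "1 \<le> Mtb g c"
  unfolding Mtb_def using ceiling_quotient_ge_1[OF assms] by (subst le_nat_iff) auto

lemma Mtb_refill:
  assumes "1 \<le> g" "g \<le> c"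
  shows "c \<le> int (Mtb g c) * g"
proof -
  have "real_of_int c = real_of_int c / real_of_int g * real_of_int g"
    using assms by simp
  also have "\<dots> \<le> real_of_int \<lceil>real_of_int c / real_of_int g\<rceil> * real_of_int g"
    using assms by (intro mult_right_mono) auto
  finally have "c \<le> \<lceil>real_of_int c / real_of_int g\<rceil> * g"
    by (metis of_int_le_iff of_int_mult)
  then show ?thesis
    using ceiling_quotient_ge_1[OF assms] by (simp add: Mtb_def)
qed

lemma bucket_level_bounds:
  assumes "1 \<le> g" "g \<le> c" "c \<le> b" "1 \<le> j" "c - g \<le> \<beta>" "\<beta> \<le> b"
  shows "0 \<le> min (\<beta> + int j * g - c) b" "min (\<beta> + int j * g - c) b \<le> b"
proof -
  have "g \<le> int j * g"
    using mult_right_mono[of 1 "int j" g] assms by simp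
  then show "0 \<le> min (\<beta> + int j * g - c) b"
    using assms by linarith
qed simp

lemma f_kf_closed_form:
  assumes tb: "1 \<le> g" "g \<le> c" "c \<le> b" and p: "1 \<le> p"
    and \<beta>: "c - g \<le> \<beta>" "\<beta> \<le> b"
  obtains \<beta>' where
    "f_kf A B g c b K p (x, w, \<beta>)
       = (Aj A (p * Mtb g c) *v x + Bj A B (p * Mtb g c) *v (K *v x), K *v x, \<beta>')"
    and "c - g \<le> \<beta>'" "\<beta>' \<le> b"
proof -
  have refill: "c \<le> int (Mtb g c) * g"
    using Mtb_refill tb by blast
  have "\<exists>\<beta>'. f_kf A B g c b K (Suc q) (x, w, \<beta>)
      = (Aj A (Suc q * Mtb g c) *v x + Bj A B (Suc q * Mtb g c) *v (K *v x), K *v x, \<beta>')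
    \<and> c - g \<le> \<beta>' \<and> \<beta>' \<le> b" for q
  proof (induct q)
    case 0
    show ?case
      using refill tb \<beta> by (simp add: kappa_f_def trans_f_sent)
  next
    case (Suc q)
    then obtain \<beta>' where "f_kf A B g c b K (Suc q) (x, w, \<beta>)
        = (Aj A (Suc q * Mtb g c) *v x + Bj A B (Suc q * Mtb g c) *v (K *v x), K *v x, \<beta>')"
      and "c - g \<le> \<beta>'" "\<beta>' \<le> b"
      by blast
    then show ?case
      using refill tb Aj_Bj_compose[of A "Mtb g c" "Suc q * Mtb g c" x B "K *v x"]
      by (auto simp: trans_f_held add.commute)
  qed
  with p that show ?thesis
    by (metis Suc_pred' less_eq_Suc_le One_nat_def)
qed

definition sample_cost ::
  "real^'n^'n \<Rightarrow> real^'m^'n \<Rightarrow> real^'n^'n \<Rightarrow> real^'m^'m \<Rightarrow> real^'n \<Rightarrow> real^'m \<Rightarrow> nat \<Rightarrow> real"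
  where "sample_cost A B Q R x u j =
    (Aj A j *v x + Bj A B j *v u) \<bullet> (Q *v (Aj A j *v x + Bj A B j *v u)) + u \<bullet> (R *v u)"

lemma sum_lessThan_split_0:
  fixes n :: nat
  assumes "1 \<le> n"
  shows "sum f {..<n} = f 0 + sum f {1..<n}"
proof -
  have "{..<n} = insert 0 {1..<n}"
    using assms by auto
  then show ?thesis
    by simp
qed

lemma interval_cost_sent:
  "1 \<le> M \<Longrightarrow> interval_cost A B Q R g c b (x, w, \<beta>) (u, M) 1 = (\<Sum>j<M. sample_cost A B Q R x u j)"
  by (simp add: sum_lessThan_split_0 interval_cost_def stage_cost_def trans_f_sent sample_cost_def)

lemma interval_cost_held:
  "1 \<le> M \<Longrightarrow> interval_cost A B Q R g c b (Aj A k *v x + Bj A B k *v u, u, \<beta>) (v, M) 0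
    = (\<Sum>j<M. sample_cost A B Q R x u (k + j))"
  by (simp add: sum_lessThan_split_0 interval_cost_def stage_cost_def trans_f_held sample_cost_def
      Aj_Bj_compose)

lemma sum_lessThan_mult_regroup:
  fixes p M :: nat
  shows "(\<Sum>l<p. \<Sum>j<M. f (l * M + j)) = (\<Sum>k<p * M. f k :: 'a::comm_monoid_add)"
proof (induct p)
  case 0
  then show ?case by simp
next
  case (Suc p)
  have "(\<Sum>k<Suc p * M. f k) = (\<Sum>k<p * M. f k) + (\<Sum>k\<in>{p * M..<p * M + M}. f k)"
    by (simp add: add.commute sum.atLeastLessThan_concat[symmetric] lessThan_atLeast0)
  also have "(\<Sum>k\<in>{p * M..<p * M + M}. f k) = (\<Sum>j<M. f (p * M + j))"
    unfolding sum.atLeastLessThan_shift_0[of f "p * M"] by (simp add: lessThan_atLeast0 o_def)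
  finally show ?case
    using Suc by simp
qed

lemma closed_loop_cost:
  assumes tb: "1 \<le> g" "g \<le> c" "c \<le> b" and p: "1 \<le> p" and \<xi>: "\<xi> \<in> Xi_f Xf UU g c b"
  shows "interval_cost A B Q R g c b \<xi> (kappa_f K (Mtb g c) \<xi>) 1
      + (\<Sum>l\<in>{1..<p}. interval_cost A B Q R g c b (f_kf A B g c b K l \<xi>) (kappa_f K (Mtb g c) \<xi>) 0)
    = (\<Sum>k<p * Mtb g c. sample_cost A B Q R (fst \<xi>) (K *v fst \<xi>) k)"
proof -
  obtain x w \<beta> where e: "\<xi> = (x, w, \<beta>)" and \<beta>: "c - g \<le> \<beta>" "\<beta> \<le> b"
    using \<xi> by (cases \<xi>) (auto simp: Xi_f_def)
  define M where "M = Mtb g c"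
  have M: "1 \<le> M"
    using Mtb_ge_1 tb by (simp add: M_def)
  have "interval_cost A B Q R g c b (f_kf A B g c b K l \<xi>) (kappa_f K M \<xi>) 0
      = (\<Sum>j<M. sample_cost A B Q R x (K *v x) (l * M + j))" if l: "1 \<le> l" for l
  proof -
    obtain \<beta>' where "f_kf A B g c b K l (x, w, \<beta>)
        = (Aj A (l * M) *v x + Bj A B (l * M) *v (K *v x), K *v x, \<beta>')"
      unfolding M_def by (rule f_kf_closed_form[OF tb l \<beta>])
    then show ?thesis
      using interval_cost_held[OF M] by (simp add: kappa_f_def e)
  qed
  then have "interval_cost A B Q R g c b \<xi> (kappa_f K M \<xi>) 1
      + (\<Sum>l\<in>{1..<p}. interval_cost A B Q R g c b (f_kf A B g c b K l \<xi>) (kappa_f K M \<xi>) 0)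
    = (\<Sum>l<p. \<Sum>j<M. sample_cost A B Q R x (K *v x) (l * M + j))"
    using interval_cost_sent[OF M] p by (simp add: sum_lessThan_split_0[OF p] e kappa_f_def)
  then show ?thesis
    by (simp add: sum_lessThan_mult_regroup e M_def)
qed

definition QSR_mat ::
  "real^'n^'n \<Rightarrow> real^'m^'n \<Rightarrow> real^'n^'n \<Rightarrow> real^'m^'m \<Rightarrow> nat \<Rightarrow> real^('n + 'm)^('n + 'm)"
  where "QSR_mat A B Q R i = block2 (Qi A Q i) (Si A B Q i) (transpose (Si A B Q i)) (Ri A B Q R i)"

lemma Si_lessThan: "Si A B Q i = (\<Sum>j<i. transpose (Aj A j) ** Q ** Bj A B j)"
  by (cases "i = 0") (simp_all add: Si_def sum_lessThan_split_0)

lemma Ri_lessThan: "Ri A B Q R i = real i *\<^sub>R R + (\<Sum>j<i. transpose (Bj A B j) ** Q ** Bj A B j)"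
  by (cases "i = 0") (simp_all add: Ri_def sum_lessThan_split_0)

lemma quadratic_form_QSR_mat:
  assumes Q: "transpose Q = Q"
  shows "join2 x u \<bullet> (QSR_mat A B Q R i *v join2 x u) = (\<Sum>j<i. sample_cost A B Q R x u j)"
proof -
  let ?a = "\<lambda>j. Aj A j *v x" and ?b = "\<lambda>j. Bj A B j *v u"
  have Qi: "x \<bullet> (Qi A Q i *v x) = (\<Sum>j<i. ?a j \<bullet> (Q *v ?a j))"
    unfolding Qi_def sum_matrix_vector_mult inner_sum_right
    by (simp add: matrix_vector_mul_assoc[symmetric] inner_transpose_right
        del: transpose_matrix_vector)
  have Si: "x \<bullet> (Si A B Q i *v u) = (\<Sum>j<i. ?a j \<bullet> (Q *v ?b j))"
    unfolding Si_lessThan sum_matrix_vector_mult inner_sum_right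
    by (simp add: matrix_vector_mul_assoc[symmetric] inner_transpose_right
        del: transpose_matrix_vector)
  have Si': "u \<bullet> (transpose (Si A B Q i) *v x) = (\<Sum>j<i. ?a j \<bullet> (Q *v ?b j))"
    using Si by (simp add: inner_transpose_right inner_commute del: transpose_matrix_vector)
  have Ri: "u \<bullet> (Ri A B Q R i *v u) = real i * (u \<bullet> (R *v u)) + (\<Sum>j<i. ?b j \<bullet> (Q *v ?b j))"
    unfolding Ri_lessThan matrix_vector_mult_add_rdistrib sum_matrix_vector_mult inner_sum_right
      inner_add_right
    by (simp add: matrix_vector_mul_assoc[symmetric] inner_transpose_right
        scaleR_matrix_vector_assoc[symmetric] del: transpose_matrix_vector)
  have "sample_cost A B Q R x u j
      = ?a j \<bullet> (Q *v ?a j) + 2 * (?a j \<bullet> (Q *v ?b j)) + ?b j \<bullet> (Q *v ?b j) + u \<bullet> (R *v u)" for j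
    using symmetric_inner_commute[OF Q, of "?b j" "?a j"]
    by (simp add: sample_cost_def matrix_vector_right_distrib inner_add_left inner_add_right)
  then show ?thesis
    unfolding QSR_mat_def block2_mult_join2 inner_join2 inner_add_right Qi Si Si' Ri
    by (simp add: sum.distrib sum_distrib_left)
qed

lemma pos_def_QSR_mat:
  assumes Q: "pos_def Q" and R: "pos_def R" and i: "1 \<le> i"
  shows "pos_def (QSR_mat A B Q R i)"
proof -
  have Qs: "transpose Q = Q" and Rs: "transpose R = R"
    using Q R by (simp_all add: pos_def_def)
  have "transpose (Qi A Q i) = Qi A Q i"
    unfolding Qi_def transpose_sum by (simp add: matrix_transpose_mul Qs matrix_mul_assoc)
  moreover have "transpose (Ri A B Q R i) = Ri A B Q R i"
    unfolding Ri_def transpose_add transpose_sum transpose_scalar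
    by (simp add: matrix_transpose_mul Qs Rs matrix_mul_assoc)
  ultimately have sym: "transpose (QSR_mat A B Q R i) = QSR_mat A B Q R i"
    by (simp add: QSR_mat_def transpose_block2)
  have "0 < w \<bullet> (QSR_mat A B Q R i *v w)" if "w \<noteq> 0" for w
  proof -
    obtain x u where w: "w = join2 x u"
      using join2_cases by blast
    have "0 < x \<bullet> (Q *v x) + u \<bullet> (R *v u)"
      using that Q R pos_def_nonneg[OF Q, of x] pos_def_nonneg[OF R, of u]
      unfolding w pos_def_def by (smt (verit) join2_eq_0_iff)
    also have "\<dots> = sample_cost A B Q R x u 0"
      by (simp add: sample_cost_def)
    also have "\<dots> \<le> (\<Sum>j<i. sample_cost A B Q R x u j)"
      using i pos_def_nonneg[OF Q] pos_def_nonneg[OF R]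
      by (intro member_le_sum) (auto simp: sample_cost_def)
    finally show ?thesis
      unfolding w quadratic_form_QSR_mat[OF Qs] .
  qed
  with sym show ?thesis
    by (simp add: pos_def_def)
qed

section \<open>The LMI as a Lyapunov decrease condition\<close>

lemma inner_block4_lmi:
  assumes X: "transpose X = X"
  shows "join4 a b c z \<bullet> (block4 X 0 0 \<Phi> 0 H11 H12 X 0 (transpose H12) H22 Y
      (transpose \<Phi>) X (transpose Y) X *v join4 a b c z)
    = a \<bullet> (X *v a) + b \<bullet> (H11 *v b + H12 *v c) + c \<bullet> (transpose H12 *v b + H22 *v c)
      + z \<bullet> (X *v z) + 2 * (a \<bullet> (\<Phi> *v z) + b \<bullet> (X *v z) + c \<bullet> (Y *v z))"
proof -
  have "z \<bullet> (transpose \<Phi> *v a) = a \<bullet> (\<Phi> *v z)" "z \<bullet> (transpose Y *v c) = c \<bullet> (Y *v z)"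
    "z \<bullet> (X *v b) = b \<bullet> (X *v z)"
    by (simp_all add: inner_transpose_right inner_commute symmetric_inner_commute[OF X]
        del: transpose_matrix_vector)
  then show ?thesis
    by (simp add: block4_mult_join4 inner_join4 inner_add_right algebra_simps)
qed

lemma lmi_lyapunov_decrease:
  fixes X :: "real^'n^'n" and Y :: "real^'n^'m" and Ai :: "real^'n^'n" and Bi :: "real^'m^'n"
    and H :: "real^('n + 'm)^('n + 'm)"
  assumes X: "pos_def X" and H: "pos_def H"
    and LMI: "pos_semidef (block4 X 0 0 (Ai ** X + Bi ** Y)
        0 (blk11 (matrix_inv H)) (blk12 (matrix_inv H)) X
        0 (transpose (blk12 (matrix_inv H))) (blk22 (matrix_inv H)) Y
        (transpose (Ai ** X + Bi ** Y)) X (transpose Y) X)"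
  shows "((Ai + Bi ** (Y ** matrix_inv X)) *v x) \<bullet> (matrix_inv X *v ((Ai + Bi ** (Y ** matrix_inv X)) *v x))
      - x \<bullet> (matrix_inv X *v x)
    \<le> - (join2 x ((Y ** matrix_inv X) *v x) \<bullet> (H *v join2 x ((Y ** matrix_inv X) *v x)))"
proof -
  define P where "P = matrix_inv X"
  define Hv where "Hv = matrix_inv H"
  define \<Phi> where "\<Phi> = Ai ** X + Bi ** Y"
  define u where "u = (Y ** P) *v x"
  define x' where "x' = (Ai + Bi ** (Y ** P)) *v x"
  define w where "w = join2 x u"
  obtain h1 h2 where Hw: "H *v w = join2 h1 h2"
    using join2_cases by blast
  define z where "z = P *v x"
  have Xs: "transpose X = X"
    using X by (simp add: pos_def_def)
  have XP: "X ** P = mat 1" "P ** X = mat 1"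
    using invertible_matrix_inv[OF pos_def_invertible[OF X]] by (simp_all add: P_def)
  have Xz: "X *v z = x" and Yz: "Y *v z = u"
    by (simp_all add: z_def u_def matrix_vector_mul_assoc XP)
  have \<Phi>z: "\<Phi> *v z = x'"
    by (simp add: \<Phi>_def x'_def matrix_vector_mult_add_rdistrib Yz[symmetric] z_def
        matrix_vector_mul_assoc[symmetric] Xz[unfolded z_def])
  have "X *v (- (P *v x')) = - x'"
    by (simp add: matrix_vector_mult_uminus_right matrix_vector_mul_assoc XP)
  have "transpose (blk12 Hv) = blk21 Hv"
    using transpose_matrix_inv_symmetric[OF pos_def_invertible[OF H]] H
    by (simp add: transpose_blk12 Hv_def pos_def_def)
  moreover have "Hv *v join2 (- h1) (- h2) = - w"
    using invertible_matrix_inv[OF pos_def_invertible[OF H]]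
    by (simp add: uminus_join2[symmetric] Hw[symmetric] matrix_vector_mult_uminus_right
        matrix_vector_mul_assoc Hv_def)
  ultimately have Hv_h: "blk11 Hv *v (- h1) + blk12 Hv *v (- h2) = - x"
    "transpose (blk12 Hv) *v (- h1) + blk22 Hv *v (- h2) = - u"
    unfolding matrix_vector_mult_join2 w_def uminus_join2 join2_eq_iff by auto
  have "w \<bullet> (H *v w) = x \<bullet> h1 + u \<bullet> h2"
    unfolding Hw by (simp add: w_def inner_join2)
  have "0 \<le> join4 (- (P *v x')) (- h1) (- h2) z \<bullet> (block4 X 0 0 \<Phi> 0 (blk11 Hv) (blk12 Hv) X
      0 (transpose (blk12 Hv)) (blk22 Hv) Y (transpose \<Phi>) X (transpose Y) X
      *v join4 (- (P *v x')) (- h1) (- h2) z)"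
    using LMI unfolding pos_semidef_def \<Phi>_def Hv_def by blast
  also have "\<dots> = x \<bullet> (P *v x) - x' \<bullet> (P *v x') - w \<bullet> (H *v w)"
    unfolding inner_block4_lmi[OF Xs] Hv_h \<Phi>z Xz Yz \<open>X *v (- (P *v x')) = - x'\<close>
      \<open>w \<bullet> (H *v w) = x \<bullet> h1 + u \<bullet> h2\<close>
    by (simp add: z_def inner_commute algebra_simps)
  finally show ?thesis
    unfolding P_def[symmetric] u_def[symmetric] x'_def[symmetric] w_def[symmetric] by linarith
qed

lemma kappa_f_mem_Pi_set:
  assumes "(*v) K ` Xf \<subseteq> UU" "1 \<le> M" "M \<le> Dbar" "\<xi> \<in> Xi_f Xf UU g c b"
  shows "kappa_f K M \<xi> \<in> Pi_set UU Dbar"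
  using assms by (auto simp: Xi_f_def Pi_set_def kappa_f_def)

lemma f_kf_mem_Xi_f:
  assumes tb: "1 \<le> g" "g \<le> c" "c \<le> b" and p: "1 \<le> p" and K: "(*v) K ` Xf \<subseteq> UU"
    and inv: "(\<lambda>x. (Aj A (p * Mtb g c) + Bj A B (p * Mtb g c) ** K) *v x) ` Xf \<subseteq> Xf"
    and \<xi>: "\<xi> \<in> Xi_f Xf UU g c b"
  shows "f_kf A B g c b K p \<xi> \<in> Xi_f Xf UU g c b"
proof -
  obtain x w \<beta> where e: "\<xi> = (x, w, \<beta>)" and x: "x \<in> Xf" and \<beta>: "c - g \<le> \<beta>" "\<beta> \<le> b"
    using \<xi> by (cases \<xi>) (auto simp: Xi_f_def)
  obtain \<beta>' where f: "f_kf A B g c b K p (x, w, \<beta>)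
      = (Aj A (p * Mtb g c) *v x + Bj A B (p * Mtb g c) *v (K *v x), K *v x, \<beta>')"
    and \<beta>': "c - g \<le> \<beta>'" "\<beta>' \<le> b"
    by (rule f_kf_closed_form[OF tb p \<beta>])
  have "Aj A (p * Mtb g c) *v x + Bj A B (p * Mtb g c) *v (K *v x) \<in> Xf"
    using inv x unfolding closed_loop_matrix_apply[symmetric] by blast
  with K x \<beta>' show ?thesis
    by (force simp: e f Xi_f_def)
qed

lemma trans_f_sent_mem_Xi_set:
  assumes tb: "1 \<le> g" "g \<le> c" "c \<le> b" and j: "1 \<le> j" and K: "(*v) K ` Xf \<subseteq> UU"
    and adm: "(\<lambda>x. (Aj A j + Bj A B j ** K) *v x) ` Xf \<subseteq> XX"
    and \<xi>: "\<xi> \<in> Xi_f Xf UU g c b"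
  shows "trans_f A B g c b \<xi> (K *v fst \<xi>, j) 1 \<in> Xi_set XX UU b"
proof -
  obtain x w \<beta> where e: "\<xi> = (x, w, \<beta>)" and x: "x \<in> Xf" and \<beta>: "c - g \<le> \<beta>" "\<beta> \<le> b"
    using \<xi> by (cases \<xi>) (auto simp: Xi_f_def)
  have "Aj A j *v x + Bj A B j *v (K *v x) \<in> XX" "K *v x \<in> UU"
    using adm K x unfolding closed_loop_matrix_apply[symmetric] by blast+
  then show ?thesis
    using bucket_level_bounds[OF tb j \<beta>] by (simp add: e Xi_set_def trans_f_def)
qed

lemma trans_f_held_mem_Xi_set:
  assumes tb: "1 \<le> g" "g \<le> c" "c \<le> b" and p: "1 \<le> p" and j: "1 \<le> j" and K: "(*v) K ` Xf \<subseteq> UU"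
    and adm: "(\<lambda>x. (Aj A (p * Mtb g c + j) + Bj A B (p * Mtb g c + j) ** K) *v x) ` Xf \<subseteq> XX"
    and \<xi>: "\<xi> \<in> Xi_f Xf UU g c b"
  shows "trans_f A B g c b (f_kf A B g c b K p \<xi>) (v, j) 0 \<in> Xi_set XX UU b"
proof -
  obtain x w \<beta> where e: "\<xi> = (x, w, \<beta>)" and x: "x \<in> Xf" and \<beta>: "c - g \<le> \<beta>" "\<beta> \<le> b"
    using \<xi> by (cases \<xi>) (auto simp: Xi_f_def)
  obtain \<beta>' where f: "f_kf A B g c b K p (x, w, \<beta>)
      = (Aj A (p * Mtb g c) *v x + Bj A B (p * Mtb g c) *v (K *v x), K *v x, \<beta>')"
    and \<beta>': "c - g \<le> \<beta>'" "\<beta>' \<le> b"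
    by (rule f_kf_closed_form[OF tb p \<beta>])
  have "Aj A (p * Mtb g c + j) *v x + Bj A B (p * Mtb g c + j) *v (K *v x) \<in> XX"
    using adm x unfolding closed_loop_matrix_apply[symmetric] by blast
  then have "Aj A j *v (Aj A (p * Mtb g c) *v x + Bj A B (p * Mtb g c) *v (K *v x))
      + Bj A B j *v (K *v x) \<in> XX"
    unfolding Aj_Bj_compose .
  with K x show ?thesis
    using bucket_level_bounds[OF tb j \<beta>'] by (force simp: e f Xi_set_def trans_f_held)
qed

lemma V_f_decrease:
  assumes tb: "1 \<le> g" "g \<le> c" "c \<le> b" and p: "1 \<le> p"
    and Q: "pos_def Q" and R: "pos_def R" and X: "pos_def X"
    and LMI: "pos_semidef
      (block4
        X 0 0 (Aj A (p * Mtb g c) ** X + Bj A B (p * Mtb g c) ** Y)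
        0 (Qt A B Q R (p * Mtb g c)) (St A B Q R (p * Mtb g c)) X
        0 (transpose (St A B Q R (p * Mtb g c))) (Rt A B Q R (p * Mtb g c)) Y
        (transpose (Aj A (p * Mtb g c) ** X + Bj A B (p * Mtb g c) ** Y)) X (transpose Y) X)"
    and \<xi>: "\<xi> \<in> Xi_f Xf UU g c b"
  defines "K \<equiv> Y ** matrix_inv X"
  shows "V_f (matrix_inv X) (f_kf A B g c b K p \<xi>) - V_f (matrix_inv X) \<xi>
    \<le> - interval_cost A B Q R g c b \<xi> (kappa_f K (Mtb g c) \<xi>) 1
      - (\<Sum>l\<in>{1..<p}. interval_cost A B Q R g c b (f_kf A B g c b K l \<xi>) (kappa_f K (Mtb g c) \<xi>) 0)"
proof -
  define i where "i = p * Mtb g c"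
  obtain x w \<beta> where e: "\<xi> = (x, w, \<beta>)" and \<beta>: "c - g \<le> \<beta>" "\<beta> \<le> b"
    using \<xi> by (cases \<xi>) (auto simp: Xi_f_def)
  obtain \<beta>' where f: "f_kf A B g c b K p (x, w, \<beta>)
      = (Aj A i *v x + Bj A B i *v (K *v x), K *v x, \<beta>')"
    unfolding i_def by (rule f_kf_closed_form[OF tb p \<beta>])
  have H: "pos_def (QSR_mat A B Q R i)"
    using pos_def_QSR_mat[OF Q R] Mtb_ge_1[OF tb(1,2)] p by (simp add: i_def)
  have "pos_semidef (block4 X 0 0 (Aj A i ** X + Bj A B i ** Y)
      0 (blk11 (matrix_inv (QSR_mat A B Q R i))) (blk12 (matrix_inv (QSR_mat A B Q R i))) X
      0 (transpose (blk12 (matrix_inv (QSR_mat A B Q R i)))) (blk22 (matrix_inv (QSR_mat A B Q R i))) Y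
      (transpose (Aj A i ** X + Bj A B i ** Y)) X (transpose Y) X)"
    using LMI by (simp add: i_def Qt_def St_def Rt_def QSR_inv_def QSR_mat_def)
  from lmi_lyapunov_decrease[OF X H this, of x]
  have "V_f (matrix_inv X) (f_kf A B g c b K p \<xi>) - V_f (matrix_inv X) \<xi>
    \<le> - (join2 x (K *v x) \<bullet> (QSR_mat A B Q R i *v join2 x (K *v x)))"
    unfolding K_def[symmetric] closed_loop_matrix_apply by (simp add: e f V_f_def)
  also have "join2 x (K *v x) \<bullet> (QSR_mat A B Q R i *v join2 x (K *v x))
    = interval_cost A B Q R g c b \<xi> (kappa_f K (Mtb g c) \<xi>) 1
      + (\<Sum>l\<in>{1..<p}. interval_cost A B Q R g c b (f_kf A B g c b K l \<xi>) (kappa_f K (Mtb g c) \<xi>) 0)"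
    using closed_loop_cost[OF tb p \<xi>, where A = A and B = B and Q = Q and R = R and K = K] Q
    by (simp add: quadratic_form_QSR_mat e i_def pos_def_def)
  finally show ?thesis
    by linarith
qed

theorem lemma1:
  fixes A :: "real^'n^'n" and B :: "real^'m^'n"
    and Q :: "real^'n^'n" and R :: "real^'m^'m"
    and XX Xf :: "(real^'n) set" and UU :: "(real^'m) set"
    and g c b :: int and P Dbar :: nat
    and X :: "real^'n^'n" and Y :: "real^'n^'m"
  assumes XX: "closed XX" "0 \<in> XX"
    and UU: "closed UU" "0 \<in> UU"
    and Qpd: "pos_def Q" and Rpd: "pos_def R"
    and tb: "g \<ge> 1" "c \<ge> g" "b \<ge> c"
    and Dbar: "Dbar \<ge> 1" "Dbar \<ge> Mtb g c"
    and Xpd: "pos_def X"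
    and LMI: "\<forall>p\<in>{1..P+1}. pos_semidef
      (block4
        X 0 0 (Aj A (p * Mtb g c) ** X + Bj A B (p * Mtb g c) ** Y)
        0 (Qt A B Q R (p * Mtb g c)) (St A B Q R (p * Mtb g c)) X
        0 (transpose (St A B Q R (p * Mtb g c))) (Rt A B Q R (p * Mtb g c)) Y
        (transpose (Aj A (p * Mtb g c) ** X + Bj A B (p * Mtb g c) ** Y)) X (transpose Y) X)"
    and Xf: "Xf \<subseteq> XX" "closed Xf" "0 \<in> Xf"
      "(\<lambda>x. (Y ** matrix_inv X) *v x) ` Xf \<subseteq> UU"
      "\<forall>p\<in>{1..P+1}. (\<lambda>x. (Aj A (p * Mtb g c) + Bj A B (p * Mtb g c) ** (Y ** matrix_inv X)) *v x) ` Xf \<subseteq> Xf"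
      "\<forall>p\<in>{0..P}. \<forall>j\<in>{1..Mtb g c - 1}.
         (\<lambda>x. (Aj A (p * Mtb g c + j) + Bj A B (p * Mtb g c + j) ** (Y ** matrix_inv X)) *v x) ` Xf \<subseteq> XX"
  shows
    "(let Pf = matrix_inv X; Kf = Y ** matrix_inv X; M = Mtb g c;
          f = trans_f A B g c b; fk = f_kf A B g c b Kf;
          \<kappa> = kappa_f Kf M; lam = interval_cost A B Q R g c b;
          \<Xi>f = Xi_f Xf UU g c b; \<Xi> = Xi_set XX UU b
      in (\<forall>\<xi>\<in>\<Xi>f. \<kappa> \<xi> \<in> Pi_set UU Dbar)
       \<and> (\<forall>p\<in>{1..P+1}. \<forall>\<xi>\<in>\<Xi>f. fk p \<xi> \<in> \<Xi>f)
       \<and> (\<forall>\<xi>\<in>\<Xi>f. \<forall>j\<in>{1..M-1}. f \<xi> (Kf *v fst \<xi>, j) 1 \<in> \<Xi>)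
       \<and> (\<forall>\<xi>\<in>\<Xi>f. \<forall>p\<in>{1..P}. \<forall>j\<in>{1..M-1}. \<forall>v. f (fk p \<xi>) (v, j) 0 \<in> \<Xi>)
       \<and> (\<forall>p\<in>{1..P+1}. \<forall>\<xi>\<in>\<Xi>f.
            V_f Pf (fk p \<xi>) - V_f Pf \<xi>
              \<le> - lam \<xi> (\<kappa> \<xi>) 1 - (\<Sum>i\<in>{1..<p}. lam (fk i \<xi>) (\<kappa> \<xi>) 0)))"
proof -
  have M: "1 \<le> Mtb g c"
    using Mtb_ge_1 tb by simp
  have sent_adm: "(\<lambda>x. (Aj A j + Bj A B j ** (Y ** matrix_inv X)) *v x) ` Xf \<subseteq> XX"
    if "j \<in> {1..Mtb g c - 1}" for j
    using Xf(6) that by force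
  show ?thesis
    unfolding Let_def
    using kappa_f_mem_Pi_set[OF Xf(4) M Dbar(2)]
      f_kf_mem_Xi_f[OF tb _ Xf(4)] Xf(5)
      trans_f_sent_mem_Xi_set[OF tb _ Xf(4) sent_adm]
      trans_f_held_mem_Xi_set[OF tb _ _ Xf(4)] Xf(6)
      V_f_decrease[OF tb _ Qpd Rpd Xpd] LMI
    by auto
qed

end
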